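(* Let $q=2^n$, let $B$ be a $k$-subset of $\mathrm{GF}(q)$, and let $E$ be a subset of $\mathrm{GF}(q)$ such that $\hat f_B(\mu)=\hat f_E(\mu^d)$ for all $\mu\in\mathrm{GF}(q)$, where $d$ is an integer with $\gcd(d,q-1)=1$. Let $a,b\in\mathrm{GF}(q)^*$. Then \[\sum_{x,y\in\mathrm{GF}(q)}(-1)^{f_B(x)+f_B(y)+f_B(ax+by)}=q^2-6qk+12k^2-8N_E(a^d,b^d,1).\] In particular, $N_B(a,b,1)=N_E(a^d,b^d,1)$.
   Context: $\mathrm{Tr}$ is the absolute trace $\mathrm{GF}(2^n)\to\mathrm{GF}(2)$. For a subset $S\subseteq\mathrm{GF}(q)$, $f_S$ is its characteristic function as a Boolean function, and $\hat f(\mu)=\sum_{x\in\mathrm{GF}(2^n)}(-1)^{f(x)+\mathrm{Tr}(\mu x)}$ is the Walsh transform. For $S\subseteq\mathrm{GF}(q)$ and $a,b,c\in\mathrm{GF}(q)$, $N_S(a,b,c)$ is the number of triples $(x,y,z)\in S^3$ with $ax+by+cz=0$. *)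

theory Defs
  imports Main
begin

text \<open>GF(2^n) is modelled as a finite field type 'a with CARD('a) = 2^n and characteristic 2.\<close>

definition abs_trace :: "nat \<Rightarrow> 'a::field \<Rightarrow> 'a" where
  "abs_trace n x = (\<Sum>i<n. x ^ (2 ^ i))"

text \<open>(-1)^t for t in GF(2) (viewed inside the field): 1 if t = 0, -1 otherwise.\<close>
definition sgn2 :: "'a::field \<Rightarrow> int" where
  "sgn2 t = (if t = 0 then 1 else -1)"

definition charf :: "'a set \<Rightarrow> 'a \<Rightarrow> 'a::field" where
  "charf S x = (if x \<in> S then 1 else 0)"

definition walsh :: "nat \<Rightarrow> 'a::{field,finite} set \<Rightarrow> 'a \<Rightarrow> int" where
  "walsh n S \<mu> = (\<Sum>x\<in>UNIV. sgn2 (charf S x + abs_trace n (\<mu> * x)))"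

definition N3 :: "'a::field set \<Rightarrow> 'a \<Rightarrow> 'a \<Rightarrow> 'a \<Rightarrow> nat" where
  "N3 S a b c = card {(x, y, z). x \<in> S \<and> y \<in> S \<and> z \<in> S \<and> a * x + b * y + c * z = 0}"

end

theory Submission
  imports Defs "HOL-Computational_Algebra.Polynomial"
begin

text \<open>Expanding three Walsh transforms and using the orthogonality of the additive characters
  \<open>\<mu> \<mapsto> (-1)^Tr(\<mu> w)\<close>, the correlation \<open>\<Sum>\<mu>. W(a\<mu>) W(b\<mu>) W(\<mu>)\<close> of the Walsh transform \<open>W\<close> of \<open>S\<close>
  is \<open>q\<close> times the character sum \<open>\<Sum>x y. (-1)^(f(x) + f(y) + f(ax + by))\<close>, and writing
  \<open>(-1)^f = 1 - 2 \<cdot> 1\<^sub>S\<close> turns that sum into \<open>q\<^sup>2 - 6 q |S| + 12 |S|\<^sup>2 - 8 N\<^sub>S(a, b, 1)\<close>.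
  Since \<open>\<mu> \<mapsto> \<mu>\<^sup>d\<close> permutes the field (\<open>d \<noteq> 0\<close>, as no Walsh spectrum is constant), the hypothesis
  carries the correlation of \<open>B\<close> at \<open>(a, b)\<close> to that of \<open>E\<close> at \<open>(a\<^sup>d, b\<^sup>d)\<close>; \<open>\<mu> = 0\<close> gives \<open>|E| = |B|\<close>.\<close>

lemma card_UNIV_field_ge_2: "card (UNIV :: 'a::{field,finite} set) \<ge> 2"
proof -
  have "card {0::'a, 1} \<le> card (UNIV :: 'a set)"
    by (rule card_mono) auto
  then show ?thesis
    by simp
qed

lemma finite_field_power_card_minus_1:
  fixes x :: "'a::{field,finite}"
  assumes "x \<noteq> 0"
  shows "x ^ (card (UNIV :: 'a set) - 1) = 1"
proof -
  have "(\<Prod>y\<in>UNIV-{0}. x * y) = (\<Prod>y\<in>UNIV-{0}. y)"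
    by (rule prod.reindex_bij_witness[of _ "\<lambda>y. y / x" "\<lambda>y. x * y"]) (use assms in auto)
  moreover have "(\<Prod>y\<in>UNIV-{0}. x * y) = x ^ (card (UNIV :: 'a set) - 1) * (\<Prod>y\<in>UNIV-{0}. y)"
    by (simp add: prod.distrib card_Diff_subset)
  ultimately show ?thesis by simp
qed

lemma finite_field_power_card:
  fixes x :: "'a::{field,finite}"
  shows "x ^ card (UNIV :: 'a set) = x"
proof -
  have card: "card (UNIV :: 'a set) = Suc (card (UNIV :: 'a set) - 1)"
    using card_UNIV_field_ge_2[where 'a='a] by simp
  show ?thesis
  proof (cases "x = 0")
    case False
    then show ?thesis
      using finite_field_power_card_minus_1[OF False] by (subst card) simp
  qed (subst card, simp)
qed

lemma bij_power_int_coprime: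
  assumes coprime: "gcd d (int (card (UNIV :: 'a::{field,finite} set) - 1)) = 1" and "d \<noteq> 0"
  shows "bij (\<lambda>x::'a. x powi d)"
proof -
  let ?m = "int (card (UNIV :: 'a set) - 1)"
  obtain u v where uv: "u * d + v * ?m = 1"
    using bezout_int[of d ?m] coprime by auto
  have inverse: "(x powi d) powi u = x" if "x \<noteq> 0" for x :: 'a
  proof -
    have "x powi (?m * v) = 1"
      using finite_field_power_card_minus_1[OF that] by (simp add: power_int_mult)
    then have "x powi (d * u) = x powi (d * u + ?m * v)"
      using that by (simp add: power_int_add)
    also have "\<dots> = x" using uv by (simp add: mult.commute)
    finally show ?thesis by (simp add: power_int_mult)
  qed
  have "inj (\<lambda>x::'a. x powi d)"
  proof (rule injI)
    fix x y :: 'a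
    assume eq: "x powi d = y powi d"
    then have "x = 0 \<longleftrightarrow> y = 0"
      using \<open>d \<noteq> 0\<close> by (metis power_int_eq_0_iff)
    then show "x = y"
      using eq inverse by (cases "x = 0") metis+
  qed
  then show ?thesis
    using finite_UNIV_inj_surj[of "\<lambda>x::'a. x powi d"] by (simp add: bij_def)
qed

lemma char2_add_self:
  fixes x :: "'a::ring_1"
  assumes "(1::'a) + 1 = 0"
  shows "x + x = 0"
  using assms by (metis distrib_left mult.right_neutral mult_zero_right)

lemma char2_add_eq_0_iff:
  fixes x y :: "'a::ring_1"
  assumes "(1::'a) + 1 = 0"
  shows "x + y = 0 \<longleftrightarrow> y = x"
  using char2_add_self[OF assms, of x] by (metis add_left_cancel)

lemma char2_power_two_power_add:
  fixes x y :: "'a::comm_ring_1"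
  assumes "(1::'a) + 1 = 0"
  shows "(x + y) ^ (2 ^ i) = x ^ (2 ^ i) + y ^ (2 ^ i)"
proof (induction i)
  case (Suc i)
  have square_add: "(u + v) ^ 2 = u ^ 2 + v ^ 2" for u v :: 'a
    using char2_add_self[OF assms, of "u * v"] by (simp add: power2_eq_square algebra_simps)
  have "(x + y) ^ (2 ^ Suc i) = ((x + y) ^ (2 ^ i)) ^ 2"
    by (simp add: power_mult[symmetric] mult.commute)
  then show ?case
    using Suc by (simp add: square_add power_mult[symmetric] mult.commute)
qed simp

lemma char2_sum_square:
  fixes f :: "'b \<Rightarrow> 'a::comm_ring_1"
  assumes "(1::'a) + 1 = 0"
  shows "(\<Sum>i\<in>A. f i) ^ 2 = (\<Sum>i\<in>A. f i ^ 2)"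
  by (induction A rule: infinite_finite_induct)
     (simp_all add: char2_power_two_power_add[OF assms, where i = 1, simplified])

lemma abs_trace_add:
  fixes x y :: "'a::field"
  assumes "(1::'a) + 1 = 0"
  shows "abs_trace n (x + y) = abs_trace n x + abs_trace n y"
  unfolding abs_trace_def by (simp add: char2_power_two_power_add[OF assms] sum.distrib)

lemma abs_trace_0_or_1:
  fixes x :: "'a::{field,finite}"
  assumes char2: "(1::'a) + 1 = 0" and q: "card (UNIV :: 'a set) = 2 ^ n"
  shows "abs_trace n x \<in> {0, 1}"
proof -
  have "abs_trace n x ^ 2 = (\<Sum>i<n. x ^ (2 ^ Suc i))"
    unfolding abs_trace_def char2_sum_square[OF char2] by (simp add: power_mult[symmetric] mult.commute)
  also have "\<dots> = abs_trace n x + x ^ (2 ^ n) - x"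
    unfolding abs_trace_def using sum.lessThan_Suc_shift[of "\<lambda>i. x ^ (2 ^ i)" n] by simp
  also have "\<dots> = abs_trace n x"
    using finite_field_power_card[of x] q by simp
  finally have "abs_trace n x * (abs_trace n x - 1) = 0"
    by (simp add: power2_eq_square algebra_simps)
  then show ?thesis by simp
qed

text \<open>The trace is a polynomial function of degree \<open>2 ^ (n - 1) < q\<close>, so it cannot vanish identically.\<close>
lemma abs_trace_eq_1_exists:
  assumes char2: "(1::'a) + 1 = 0" and q: "card (UNIV :: 'a set) = 2 ^ n"
  obtains c :: "'a::{field,finite}" where "abs_trace n c = 1"
proof -
  have n: "n \<ge> 1"
    using card_UNIV_field_ge_2[where 'a='a] q by (cases n) auto
  define P :: "'a poly" where "P = (\<Sum>i<n. monom 1 (2 ^ i))"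
  have poly_P: "poly P x = abs_trace n x" for x
    by (simp add: P_def poly_sum poly_monom abs_trace_def)
  have "degree P \<le> 2 ^ (n - 1)"
    unfolding P_def
  proof (rule degree_sum_le)
    fix i assume "i \<in> {..<n}"
    then have "(2::nat) ^ i \<le> 2 ^ (n - 1)" by (intro power_increasing) auto
    then show "degree (monom (1::'a) (2 ^ i)) \<le> 2 ^ (n - 1)"
      using degree_monom_le order_trans by blast
  qed simp
  also have "\<dots> < card (UNIV :: 'a set)"
    using q n by (cases n) auto
  finally have "card (UNIV :: 'a set) > degree P" .
  moreover have "coeff P 1 = 1"
    using n by (simp add: P_def coeff_sum coeff_monom sum.delta' eq_commute[of 1] power_eq_1_iff)
  then have "P \<noteq> 0" by auto
  ultimately have "{x. poly P x = 0} \<noteq> UNIV"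
    using card_poly_roots_bound[of P] by auto
  then show ?thesis
    using that abs_trace_0_or_1[OF char2 q] poly_P by auto
qed

lemma sgn2_add:
  fixes u v :: "'a::field"
  assumes "(1::'a) + 1 = 0" and "u \<in> {0, 1}" and "v \<in> {0, 1}"
  shows "sgn2 (u + v) = sgn2 u * sgn2 v"
  using assms by (auto simp: sgn2_def)

lemma sum_sgn2_abs_trace_mult:
  fixes w :: "'a::{field,finite}"
  assumes char2: "(1::'a) + 1 = 0" and q: "card (UNIV :: 'a set) = 2 ^ n"
  shows "(\<Sum>\<mu>\<in>UNIV. sgn2 (abs_trace n (\<mu> * w))) = (if w = 0 then int (card (UNIV :: 'a set)) else 0)"
proof (cases "w = 0")
  case True
  then show ?thesis by (simp add: abs_trace_def sgn2_def power_0_left)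
next
  case False
  obtain c :: 'a where c: "abs_trace n c = 1"
    using abs_trace_eq_1_exists[OF char2 q] by blast
  have shift: "sgn2 (abs_trace n (\<mu> + c)) = - sgn2 (abs_trace n \<mu>)" for \<mu>
    using sgn2_add[OF char2 abs_trace_0_or_1[OF char2 q, of \<mu>] abs_trace_0_or_1[OF char2 q, of c]] c
    by (simp add: abs_trace_add[OF char2] sgn2_def)
  let ?S = "\<Sum>\<mu>\<in>UNIV. sgn2 (abs_trace n (\<mu> :: 'a))"
  have rescale: "(\<Sum>\<mu>\<in>UNIV. sgn2 (abs_trace n (\<mu> * w))) = ?S"
    by (rule sum.reindex_bij_witness[of _ "\<lambda>\<mu>. \<mu> / w" "\<lambda>\<mu>. \<mu> * w"]) (use False in simp_all)
  have "?S = (\<Sum>\<mu>\<in>UNIV. sgn2 (abs_trace n (\<mu> + c)))"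
    by (rule sum.reindex_bij_witness[of _ "\<lambda>\<mu>. \<mu> + c" "\<lambda>\<mu>. \<mu> - c"]) simp_all
  also have "\<dots> = - ?S"
    by (simp add: shift sum_negf)
  finally have "?S = 0"
    by simp
  then show ?thesis
    using rescale False by simp
qed

definition signf :: "'a set \<Rightarrow> 'a \<Rightarrow> int" where
  "signf S x = (if x \<in> S then -1 else 1)"

lemma sgn2_charf: "sgn2 (charf S x) = signf S x"
  by (simp add: sgn2_def charf_def signf_def)

lemma signf_eq: "signf S x = 1 - 2 * of_bool (x \<in> S)"
  by (simp add: signf_def)

lemma sgn2_charf_add:
  fixes u :: "'a::field"
  assumes "(1::'a) + 1 = 0" and "u \<in> {0, 1}"
  shows "sgn2 (charf S x + u) = signf S x * sgn2 u"
  using assms by (simp add: sgn2_add charf_def flip: sgn2_charf)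

lemma sgn2_charf_add3:
  fixes S :: "'a::field set"
  assumes "(1::'a) + 1 = 0"
  shows "sgn2 (charf S x + charf S y + charf S z) = signf S x * signf S y * signf S z"
  using assms by (simp add: sgn2_def charf_def signf_def)

lemma walsh_eq_sum_signf:
  fixes S :: "'a::{field,finite} set"
  assumes char2: "(1::'a) + 1 = 0" and q: "card (UNIV :: 'a set) = 2 ^ n"
  shows "walsh n S \<mu> = (\<Sum>x\<in>UNIV. signf S x * sgn2 (abs_trace n (\<mu> * x)))"
  unfolding walsh_def by (intro sum.cong refl sgn2_charf_add[OF char2 abs_trace_0_or_1[OF char2 q]])

lemma walsh_zero:
  fixes S :: "'a::{field,finite} set"
  assumes char2: "(1::'a) + 1 = 0" and q: "card (UNIV :: 'a set) = 2 ^ n"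
  shows "walsh n S 0 = int (card (UNIV :: 'a set)) - 2 * int (card S)"
  by (simp add: walsh_eq_sum_signf[OF char2 q] signf_eq sgn2_def abs_trace_def power_0_left
                sum_subtractf sum_distrib_left[symmetric])

lemma sum_walsh:
  fixes S :: "'a::{field,finite} set"
  assumes char2: "(1::'a) + 1 = 0" and q: "card (UNIV :: 'a set) = 2 ^ n"
  shows "(\<Sum>\<mu>\<in>UNIV. walsh n S \<mu>) = int (card (UNIV :: 'a set)) * signf S 0"
proof -
  have "(\<Sum>\<mu>\<in>UNIV. walsh n S \<mu>) = (\<Sum>x\<in>UNIV. signf S x * (\<Sum>\<mu>\<in>UNIV. sgn2 (abs_trace n (\<mu> * x))))"
    unfolding walsh_eq_sum_signf[OF char2 q] sum_distrib_left by (rule sum.swap)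
  then show ?thesis
    by (simp add: sum_sgn2_abs_trace_mult[OF char2 q] if_distrib[of "(*) _"] cong: if_cong)
qed

text \<open>Walsh values are congruent to \<open>q\<close> modulo 2, while a constant transform \<open>c\<close> would give \<open>q * c = \<plusminus>q\<close>.\<close>
lemma walsh_not_constant:
  fixes S :: "'a::{field,finite} set"
  assumes char2: "(1::'a) + 1 = 0" and q: "card (UNIV :: 'a set) = 2 ^ n"
  shows "\<not> (\<forall>\<mu>. walsh n S \<mu> = c)"
proof
  assume const: "\<forall>\<mu>. walsh n S \<mu> = c"
  have "int (card (UNIV :: 'a set)) * c = int (card (UNIV :: 'a set)) * signf S 0"
    using sum_walsh[OF char2 q, of S] const by simp
  then have "c = 1 \<or> c = -1"
    using card_UNIV_field_ge_2[where 'a='a] by (auto simp: signf_def)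
  moreover have "even (walsh n S 0)"
    using walsh_zero[OF char2 q, of S] q card_UNIV_field_ge_2[where 'a='a] by (cases n) auto
  ultimately show False
    using const by auto
qed

lemma sgn2_abs_trace_add:
  fixes x y :: "'a::{field,finite}"
  assumes char2: "(1::'a) + 1 = 0" and q: "card (UNIV :: 'a set) = 2 ^ n"
  shows "sgn2 (abs_trace n (x + y)) = sgn2 (abs_trace n x) * sgn2 (abs_trace n y)"
  unfolding abs_trace_add[OF char2] by (intro sgn2_add char2 abs_trace_0_or_1[OF char2 q])

lemma sum_product_three:
  fixes f g h :: "'b \<Rightarrow> 'c::comm_semiring_0"
  shows "sum f A * sum g B * sum h C = (\<Sum>x\<in>A. \<Sum>y\<in>B. \<Sum>z\<in>C. f x * g y * h z)"
proof -
  have "sum f A * sum g B * sum h C = (\<Sum>x\<in>A. \<Sum>y\<in>B. f x * g y) * sum h C"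
    by (simp only: sum_product[of f A g B])
  also have "\<dots> = (\<Sum>x\<in>A. \<Sum>y\<in>B. f x * g y * sum h C)"
    by (simp only: sum_distrib_right)
  finally show ?thesis
    by (simp only: sum_distrib_left)
qed

text \<open>By orthogonality of the additive characters \<open>\<mu> \<mapsto> (-1)^Tr(\<mu> w)\<close>, only the triples
  with \<open>z = a x + b y\<close> survive the summation over \<open>\<mu>\<close>.\<close>
lemma sum_walsh_triple:
  fixes S :: "'a::{field,finite} set" and a b :: 'a
  assumes char2: "(1::'a) + 1 = 0" and q: "card (UNIV :: 'a set) = 2 ^ n"
  shows "(\<Sum>\<mu>\<in>UNIV. walsh n S (a * \<mu>) * walsh n S (b * \<mu>) * walsh n S \<mu>)
    = int (card (UNIV :: 'a set)) * (\<Sum>x\<in>UNIV. \<Sum>y\<in>UNIV. signf S x * signf S y * signf S (a * x + b * y))"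
proof -
  let ?q = "int (card (UNIV :: 'a set))"
  define \<chi> where "\<chi> t = sgn2 (abs_trace n t)" for t :: 'a
  define F where "F = signf S"
  have pointwise: "F x * \<chi> (a * \<mu> * x) * (F y * \<chi> (b * \<mu> * y)) * (F z * \<chi> (\<mu> * z))
      = F x * F y * F z * \<chi> (\<mu> * (a * x + b * y + z))" for \<mu> x y z
    by (simp add: \<chi>_def sgn2_abs_trace_add[OF char2 q] algebra_simps)
  have expand: "walsh n S (a * \<mu>) * walsh n S (b * \<mu>) * walsh n S \<mu>
      = (\<Sum>x\<in>UNIV. \<Sum>y\<in>UNIV. \<Sum>z\<in>UNIV. F x * F y * F z * \<chi> (\<mu> * (a * x + b * y + z)))" for \<mu>
    unfolding walsh_eq_sum_signf[OF char2 q] F_def[symmetric] \<chi>_def[symmetric] sum_product_three pointwise ..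
  have "(\<Sum>\<mu>\<in>UNIV. walsh n S (a * \<mu>) * walsh n S (b * \<mu>) * walsh n S \<mu>)
      = (\<Sum>x\<in>UNIV. \<Sum>y\<in>UNIV. \<Sum>z\<in>UNIV. \<Sum>\<mu>\<in>UNIV. F x * F y * F z * \<chi> (\<mu> * (a * x + b * y + z)))"
    unfolding expand
    by (rule trans[OF sum.swap], rule sum.cong[OF refl], rule trans[OF sum.swap], rule sum.cong[OF refl],
        rule sum.swap)
  also have "\<dots> = (\<Sum>x\<in>UNIV. \<Sum>y\<in>UNIV. \<Sum>z\<in>UNIV. F x * F y * F z * (if z = a * x + b * y then ?q else 0))"
    unfolding \<chi>_def sum_distrib_left[symmetric] sum_sgn2_abs_trace_mult[OF char2 q] char2_add_eq_0_iff[OF char2] ..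
  also have "\<dots> = ?q * (\<Sum>x\<in>UNIV. \<Sum>y\<in>UNIV. F x * F y * F (a * x + b * y))"
    by (simp add: if_distrib[of "(*) _"] sum_distrib_left mult_ac cong: if_cong)
  finally show ?thesis
    unfolding F_def .
qed

lemma sum_of_bool_affine_mem:
  fixes a b :: "'a::{field,finite}"
  assumes "b \<noteq> 0"
  shows "(\<Sum>y\<in>UNIV. of_bool (a + b * y \<in> S)) = int (card S)"
proof -
  have "(\<Sum>y\<in>UNIV. of_bool (a + b * y \<in> S)) = (\<Sum>z\<in>UNIV. of_bool (z \<in> S) :: int)"
    by (rule sum.reindex_bij_witness[of _ "\<lambda>z. (z - a) / b" "\<lambda>y. a + b * y"]) (use assms in auto)
  then show ?thesis
    by simp
qed

lemma int_N3_eq_sum_of_bool: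
  fixes S :: "'a::{field,finite} set"
  assumes char2: "(1::'a) + 1 = 0"
  shows "int (N3 S a b 1) = (\<Sum>x\<in>UNIV. \<Sum>y\<in>UNIV. of_bool (x \<in> S) * of_bool (y \<in> S) * of_bool (a * x + b * y \<in> S))"
proof -
  let ?P = "{(x, y). x \<in> S \<and> y \<in> S \<and> a * x + b * y \<in> S}"
  have "bij_betw (\<lambda>(x, y). (x, y, a * x + b * y)) ?P
          {(x, y, z). x \<in> S \<and> y \<in> S \<and> z \<in> S \<and> a * x + b * y + 1 * z = 0}"
    by (rule bij_betw_byWitness[where f' = "\<lambda>(x, y, z). (x, y)"]) (auto simp: char2_add_eq_0_iff[OF char2])
  then have "N3 S a b 1 = card ?P"
    unfolding N3_def by (simp add: bij_betw_same_card)
  also have "int (card ?P) = (\<Sum>p\<in>UNIV \<times> UNIV. of_bool (p \<in> ?P))"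
    by simp
  also have "\<dots> = (\<Sum>x\<in>UNIV. \<Sum>y\<in>UNIV. of_bool ((x, y) \<in> ?P))"
    by (rule sum.cartesian_product')
  finally show ?thesis
    by (simp add: of_bool_conj mult.assoc)
qed

lemma sum_signf_plane:
  fixes S :: "'a::{field,finite} set" and a b :: 'a
  assumes char2: "(1::'a) + 1 = 0" and a: "a \<noteq> 0" and b: "b \<noteq> 0"
  shows "(\<Sum>x\<in>UNIV. \<Sum>y\<in>UNIV. signf S x * signf S y * signf S (a * x + b * y))
    = int (card (UNIV :: 'a set)) ^ 2 - 6 * int (card (UNIV :: 'a set)) * int (card S)
      + 12 * int (card S) ^ 2 - 8 * int (N3 S a b 1)"
proof -
  define u :: "'a \<Rightarrow> int" where "u x = of_bool (x \<in> S)" for x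
  let ?q = "int (card (UNIV :: 'a set))" and ?k = "int (card S)"
  have sum_u: "(\<Sum>x\<in>UNIV. u x) = ?k"
    by (simp add: u_def)
  have sum_u_row: "(\<Sum>y\<in>UNIV. u (a * x + b * y)) = ?k" for x
    unfolding u_def by (rule sum_of_bool_affine_mem[OF b])
  have sum_u_col: "(\<Sum>x\<in>UNIV. u (a * x + b * y)) = ?k" for y
    unfolding u_def using sum_of_bool_affine_mem[OF a, of "b * y" S] by (simp add: add.commute)
  have "(\<Sum>x\<in>UNIV. \<Sum>y\<in>UNIV. signf S x * signf S y * signf S (a * x + b * y))
     = (\<Sum>x\<in>UNIV. \<Sum>y\<in>UNIV. 1 - 2 * u x - 2 * u y - 2 * u (a * x + b * y)
         + 4 * (u x * u y) + 4 * (u x * u (a * x + b * y)) + 4 * (u y * u (a * x + b * y))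
         - 8 * (u x * u y * u (a * x + b * y)))"
    by (simp add: signf_eq u_def[symmetric] algebra_simps)
  also have "\<dots> = (\<Sum>x\<in>(UNIV :: 'a set). \<Sum>y\<in>(UNIV :: 'a set). 1) - 2 * (\<Sum>x\<in>UNIV. \<Sum>y\<in>(UNIV :: 'a set). u x)
      - 2 * (\<Sum>x\<in>(UNIV :: 'a set). \<Sum>y\<in>UNIV. u y) - 2 * (\<Sum>x\<in>UNIV. \<Sum>y\<in>UNIV. u (a * x + b * y))
      + 4 * (\<Sum>x\<in>UNIV. \<Sum>y\<in>UNIV. u x * u y) + 4 * (\<Sum>x\<in>UNIV. \<Sum>y\<in>UNIV. u x * u (a * x + b * y))
      + 4 * (\<Sum>x\<in>UNIV. \<Sum>y\<in>UNIV. u y * u (a * x + b * y))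
      - 8 * (\<Sum>x\<in>UNIV. \<Sum>y\<in>UNIV. u x * u y * u (a * x + b * y))"
    by (simp only: sum.distrib sum_subtractf sum_distrib_left)
  also have "\<dots> = ?q ^ 2 - 6 * ?q * ?k + 12 * ?k ^ 2 - 8 * int (N3 S a b 1)"
  proof -
    have "(\<Sum>x\<in>UNIV. \<Sum>y\<in>UNIV. u y * u (a * x + b * y)) = ?k ^ 2"
      by (subst sum.swap) (simp add: sum_u_col sum_u power2_eq_square flip: sum_distrib_left sum_distrib_right)
    moreover have "(\<Sum>x\<in>UNIV. \<Sum>y\<in>UNIV. u x * u (a * x + b * y)) = ?k ^ 2"
      by (simp add: sum_u_row sum_u power2_eq_square flip: sum_distrib_left sum_distrib_right)
    moreover have "(\<Sum>x\<in>UNIV. \<Sum>y\<in>UNIV. u x * u y) = ?k ^ 2"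
      by (simp add: sum_u power2_eq_square flip: sum_distrib_left sum_distrib_right)
    moreover have "(\<Sum>x\<in>UNIV. \<Sum>y\<in>UNIV. u x * u y * u (a * x + b * y)) = int (N3 S a b 1)"
      by (simp add: int_N3_eq_sum_of_bool[OF char2] u_def)
    moreover have "(\<Sum>x\<in>UNIV. \<Sum>y\<in>(UNIV :: 'a set). u x) = ?q * ?k"
      by (simp add: sum_u flip: sum_distrib_left)
    ultimately show ?thesis
      by (simp add: sum_u sum_u_row power2_eq_square)
  qed
  finally show ?thesis .
qed

theorem lemma5:
  fixes B E :: "'a::{field,finite} set" and n k :: nat and d :: int and a b :: 'a
  assumes q: "card (UNIV::'a set) = 2 ^ n"
    and char2: "(1::'a) + 1 = 0"
    and cardB: "card B = k"
    and d: "gcd d (int (card (UNIV::'a set) - 1)) = 1"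
    and walsh_eq: "\<forall>\<mu>::'a. walsh n B \<mu> = walsh n E (\<mu> powi d)"
    and a: "a \<noteq> 0" and b: "b \<noteq> 0"
  shows "(\<Sum>x\<in>(UNIV::'a set). \<Sum>y\<in>(UNIV::'a set).
            sgn2 (charf B x + charf B y + charf B (a * x + b * y)))
         = int (card (UNIV::'a set))^2 - 6 * int (card (UNIV::'a set)) * int k + 12 * int k ^ 2
           - 8 * int (N3 E (a powi d) (b powi d) 1)
       \<and> N3 B a b 1 = N3 E (a powi d) (b powi d) 1"
proof -
  let ?q = "int (card (UNIV :: 'a set))"
  let ?T = "\<lambda>S a b. \<Sum>x\<in>UNIV. \<Sum>y\<in>UNIV. signf S x * signf S y * signf S (a * x + b * y)"
  have "d \<noteq> 0"
    using walsh_eq walsh_not_constant[OF char2 q, of B "walsh n E 1"] by auto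
  then have bij: "bij (\<lambda>\<mu>::'a. \<mu> powi d)"
    by (rule bij_power_int_coprime[OF d])
  have "card E = k"
    using walsh_eq[rule_format, of 0] \<open>d \<noteq> 0\<close> cardB by (simp add: walsh_zero[OF char2 q])
  have "?q * ?T B a b = (\<Sum>\<mu>\<in>UNIV. walsh n B (a * \<mu>) * walsh n B (b * \<mu>) * walsh n B \<mu>)"
    by (rule sum_walsh_triple[OF char2 q, symmetric])
  also have "\<dots> = (\<Sum>\<mu>\<in>UNIV. walsh n E (a powi d * \<mu> powi d) * walsh n E (b powi d * \<mu> powi d) * walsh n E (\<mu> powi d))"
    using walsh_eq by (simp add: power_int_mult_distrib)
  also have "\<dots> = (\<Sum>\<nu>\<in>UNIV. walsh n E (a powi d * \<nu>) * walsh n E (b powi d * \<nu>) * walsh n E \<nu>)"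
    by (rule sum.reindex_bij_betw[OF bij])
  also have "\<dots> = ?q * ?T E (a powi d) (b powi d)"
    by (rule sum_walsh_triple[OF char2 q])
  finally have "?T B a b = ?T E (a powi d) (b powi d)"
    using card_UNIV_field_ge_2[where 'a='a] by simp
  then show ?thesis
    using a b \<open>card E = k\<close> cardB
    by (simp add: sgn2_charf_add3[OF char2] sum_signf_plane[OF char2])
qed

end
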